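(* Let $M$ be a matroid on the ground set $E$ and let $\ell:E\to\mathbb{R}$ be a generic real-valued function. Then: (A) The order $<_\ell$ of $\mathcal{B}(M)$ induced by ordering the $\ell$-weights is a shelling order of the independence complex $\mathcal{I}(M)$. (B) For every basis $B$, the restriction set of $B$ in the shelling order $<_\ell$ is the internally passive set of $B$ with respect to the total order on $E$ induced by $\ell$.
   Context: For a matroid $M$ on finite set $E$, $\mathcal{I}(M)$ is its independence complex and $\mathcal{B}(M)$ its set of bases. For $A\subseteq E$, the $\ell$-weight is $\ell(A)=\sum_{a\in A}\ell(a)$. Generic means $\ell$ takes distinct values on elements of $E$ and distinct weights on distinct bases; $<_\ell$ is defined by $B<_\ell B'$ iff $\ell(B)<\ell(B')$, and the total order on $E$ induced by $\ell$ is $e<e'$ iff $\ell(e)<\ell(e')$. A shelling order of a pure simplicial complex is a total order $F_1<\dots<F_k$ of its facets such that for each $j\ge2$, $\langle F_1,\dots,F_{j-1}\rangle\cap\langle F_j\rangle$ is pure of dimension one less than the complex. For a shelling order, the restriction set $\mathcal{R}(F_j)$ is the unique subset of $F_j$ such that the faces of $\langle F_1,\dots,F_j\rangle$ not in $\langle F_1,\dots,F_{j-1}\rangle$ are exactly the subsets of $F_j$ containing $\mathcal{R}(F_j)$. For a total order $<$ on $E$ and a basis $B$, the internally passive set $IP_<(B)$ is the set of $b\in B$ for which there exists $b'\notin B$ with $b'<b$ and $(B\setminus\{b\})\cup\{b'\}$ a basis. *)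

theory Defs
  imports Complex_Main
begin

definition matroid :: "'a set \<Rightarrow> 'a set set \<Rightarrow> bool" where
  "matroid E Ind \<longleftrightarrow>
     finite E \<and> (\<forall>X\<in>Ind. X \<subseteq> E) \<and> {} \<in> Ind \<and>
     (\<forall>X Y. Y \<in> Ind \<and> X \<subseteq> Y \<longrightarrow> X \<in> Ind) \<and>
     (\<forall>X Y. X \<in> Ind \<and> Y \<in> Ind \<and> card X < card Y \<longrightarrow>
        (\<exists>y\<in>Y - X. insert y X \<in> Ind))"

definition facets :: "'a set set \<Rightarrow> 'a set set" where
  "facets K = {F\<in>K. \<forall>G\<in>K. F \<subseteq> G \<longrightarrow> G = F}"

definition bases :: "'a set set \<Rightarrow> 'a set set" where
  "bases Ind = facets Ind"

definition weight :: "('a \<Rightarrow> real) \<Rightarrow> 'a set \<Rightarrow> real" where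
  "weight l A = (\<Sum>a\<in>A. l a)"

definition generic :: "'a set \<Rightarrow> 'a set set \<Rightarrow> ('a \<Rightarrow> real) \<Rightarrow> bool" where
  "generic E Ind l \<longleftrightarrow> inj_on l E \<and> inj_on (weight l) (bases Ind)"

definition gen :: "'a set list \<Rightarrow> 'a set set" where
  "gen Fs = {S. \<exists>F\<in>set Fs. S \<subseteq> F}"

text \<open>K is pure with all facets of cardinality d (i.e. of dimension d - 1).\<close>
definition pure_card :: "'a set set \<Rightarrow> nat \<Rightarrow> bool" where
  "pure_card K d \<longleftrightarrow> (\<forall>S\<in>K. \<exists>T\<in>K. S \<subseteq> T \<and> card T = d) \<and> (\<forall>T\<in>K. card T \<le> d)"

definition shelling_order :: "'a set set \<Rightarrow> 'a set list \<Rightarrow> bool" where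
  "shelling_order K Fs \<longleftrightarrow>
     distinct Fs \<and> set Fs = facets K \<and>
     (\<exists>d. pure_card K d \<and>
        (\<forall>j. 0 < j \<and> j < length Fs \<longrightarrow>
           pure_card (gen (take j Fs) \<inter> gen [Fs ! j]) (d - 1)))"

definition restriction_set :: "'a set list \<Rightarrow> nat \<Rightarrow> 'a set" where
  "restriction_set Fs j =
     (THE R. R \<subseteq> Fs ! j \<and>
        gen (take (Suc j) Fs) - gen (take j Fs) = {S. R \<subseteq> S \<and> S \<subseteq> Fs ! j})"

definition internally_passive :: "'a set \<Rightarrow> 'a set set \<Rightarrow> ('a \<Rightarrow> real) \<Rightarrow> 'a set \<Rightarrow> 'a set" where
  "internally_passive E Ind l B =
     {b\<in>B. \<exists>b'\<in>E - B. l b' < l b \<and> (B - {b}) \<union> {b'} \<in> bases Ind}"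

end

theory Submission
  imports Defs
begin

(*
  The engine is an exchange lemma: if the basis A is lighter than the basis B,
  then some b in B - A can be traded for a lighter a in A - B so that B - b + a is again
  a basis. Since A - B is lighter than B - A and has the same size, some threshold t has
  more elements of A - B than of B - A below it; augmenting the light part of B from the
  light part of A adds such an a, and completing inside B + a to a basis drops an element b
  above the threshold.

  Consequently a face S of the basis B_j already lies in an earlier basis iff S misses an
  internally passive element of B_j: one direction is the exchange lemma applied to the
  earlier basis, the other is the exchange B_j - b + b' itself, which is lighter. So the old
  faces of B_j form the pure complex of subsets of B_j not containing IP(B_j), and the new
  faces form the interval from IP(B_j) to B_j.
*)

lemma sum_le_sum_if_counts_below_le:
  fixes f :: "'a \<Rightarrow> 'b::{linorder, ordered_comm_monoid_add}"
  assumes "finite X" "finite Y" "card X = card Y"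
    and "\<And>t. card {x\<in>X. f x < t} \<le> card {y\<in>Y. f y < t}"
  shows "sum f Y \<le> sum f X"
  using assms
proof (induction "card X" arbitrary: X Y)
  case 0
  then show ?case by simp
next
  case (Suc n)
  then have "X \<noteq> {}" "Y \<noteq> {}" by auto
  obtain x0 where x0: "x0 \<in> X" "\<And>x. x \<in> X \<Longrightarrow> f x0 \<le> f x"
    using arg_min_if_finite[OF Suc.prems(1) \<open>X \<noteq> {}\<close>, of f] by (meson not_less)
  obtain y0 where y0: "y0 \<in> Y" "\<And>y. y \<in> Y \<Longrightarrow> f y0 \<le> f y"
    using arg_min_if_finite[OF Suc.prems(2) \<open>Y \<noteq> {}\<close>, of f] by (meson not_less)
  have "card {x\<in>X. f x < f y0} \<le> card {y\<in>Y. f y < f y0}"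
    by (rule Suc.prems(4))
  also have "{y\<in>Y. f y < f y0} = {}"
    using y0(2) by (auto simp: not_less[symmetric])
  finally have "{x\<in>X. f x < f y0} = {}"
    using Suc.prems(1) by simp
  then have y0_x0: "f y0 \<le> f x0"
    using x0(1) by (auto simp: not_less[symmetric])
  have "sum f (Y - {y0}) \<le> sum f (X - {x0})"
  proof (rule Suc.hyps)
    show "n = card (X - {x0})" "card (X - {x0}) = card (Y - {y0})"
      using Suc.hyps(2) Suc.prems(3) x0(1) y0(1) by simp_all
    show "finite (X - {x0})" "finite (Y - {y0})"
      using Suc.prems(1,2) by simp_all
    fix t
    show "card {x \<in> X - {x0}. f x < t} \<le> card {y \<in> Y - {y0}. f y < t}"
    proof (cases "f x0 < t")
      case True
      have "{x \<in> X - {x0}. f x < t} = {x\<in>X. f x < t} - {x0}"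
        and "{y \<in> Y - {y0}. f y < t} = {y\<in>Y. f y < t} - {y0}"
        by auto
      moreover have "x0 \<in> {x\<in>X. f x < t}" "y0 \<in> {y\<in>Y. f y < t}"
        using True x0(1) y0(1) y0_x0 by auto
      ultimately show ?thesis
        using Suc.prems(4)[of t] by simp
    next
      case False
      then have "{x \<in> X - {x0}. f x < t} = {}"
        using x0(2) by (auto simp: not_less[symmetric] dest: order.strict_trans2)
      then show ?thesis by (metis card.empty zero_le)
    qed
  qed
  then show ?case
    using x0(1) y0(1) y0_x0 Suc.prems(1,2) by (simp add: sum.remove add_mono)
qed

lemma weight_exchange:
  assumes "finite B" "b \<in> B" "a \<notin> B"
  shows "weight l ((B - {b}) \<union> {a}) = weight l B - l b + l a"
proof -
  have "weight l ((B - {b}) \<union> {a}) = l a + weight l (B - {b})"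
    using assms by (simp add: weight_def)
  moreover have "weight l B = l b + weight l (B - {b})"
    using assms by (simp add: weight_def sum.remove)
  ultimately show ?thesis
    by simp
qed

lemma gen_take_iff:
  assumes "j \<le> length Fs"
  shows "S \<in> gen (take j Fs) \<longleftrightarrow> (\<exists>i<j. S \<subseteq> Fs ! i)"
  unfolding gen_def nth_image[OF assms, symmetric] by auto

lemma gen_singleton: "gen [F] = Pow F"
  by (auto simp: gen_def)

lemma gen_take_Suc: "j < length Fs \<Longrightarrow> gen (take (Suc j) Fs) = gen (take j Fs) \<union> Pow (Fs ! j)"
  by (auto simp: take_Suc_conv_app_nth gen_def)

lemma pure_card_subsets_not_containing:
  assumes "finite F" "R \<subseteq> F"
  shows "pure_card {S. S \<subseteq> F \<and> \<not> R \<subseteq> S} (card F - 1)"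
  unfolding pure_card_def
proof (intro conjI ballI)
  fix S assume "S \<in> {S. S \<subseteq> F \<and> \<not> R \<subseteq> S}"
  then obtain b where b: "b \<in> R" "b \<notin> S" "S \<subseteq> F"
    by blast
  then have "card (F - {b}) = card F - 1"
    using assms by (simp add: subsetD)
  with b show "\<exists>T\<in>{S. S \<subseteq> F \<and> \<not> R \<subseteq> S}. S \<subseteq> T \<and> card T = card F - 1"
    by (intro bexI[of _ "F - {b}"]) blast+
next
  fix T assume "T \<in> {S. S \<subseteq> F \<and> \<not> R \<subseteq> S}"
  then have "T \<subset> F"
    using assms(2) by blast
  then have "card T < card F"
    by (rule psubset_card_mono[OF assms(1)])
  then show "card T \<le> card F - 1"
    by simp
qed

lemma restriction_set_eqI:
  assumes "R \<subseteq> Fs ! j"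
    and "gen (take (Suc j) Fs) - gen (take j Fs) = {S. R \<subseteq> S \<and> S \<subseteq> Fs ! j}"
  shows "restriction_set Fs j = R"
  unfolding restriction_set_def
proof (rule the_equality)
  fix R' assume R': "R' \<subseteq> Fs ! j \<and>
    gen (take (Suc j) Fs) - gen (take j Fs) = {S. R' \<subseteq> S \<and> S \<subseteq> Fs ! j}"
  then have "{S. R' \<subseteq> S \<and> S \<subseteq> Fs ! j} = {S. R \<subseteq> S \<and> S \<subseteq> Fs ! j}"
    using assms(2) by simp
  then show "R' = R"
    using R' assms(1) by blast
qed (use assms in blast)

lemma internally_passive_subset: "internally_passive E Ind l B \<subseteq> B"
  unfolding internally_passive_def by blast

lemma bases_subset_indep: "bases Ind \<subseteq> Ind"
  unfolding bases_def facets_def by blast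

lemma basis_maximal: "B \<in> bases Ind \<Longrightarrow> X \<in> Ind \<Longrightarrow> B \<subseteq> X \<Longrightarrow> X = B"
  unfolding bases_def facets_def by blast

context
  fixes E :: "'a set" and Ind :: "'a set set"
  assumes matroid: "matroid E Ind"
begin

lemma indep_subset_ground: "X \<in> Ind \<Longrightarrow> X \<subseteq> E"
  using matroid unfolding matroid_def by blast

lemma indep_finite: "X \<in> Ind \<Longrightarrow> finite X"
  using matroid indep_subset_ground unfolding matroid_def by (meson finite_subset)

lemma indep_subset: "Y \<in> Ind \<Longrightarrow> X \<subseteq> Y \<Longrightarrow> X \<in> Ind"
  using matroid unfolding matroid_def by blast

lemma indep_augment:
  "X \<in> Ind \<Longrightarrow> Y \<in> Ind \<Longrightarrow> card X < card Y \<Longrightarrow> \<exists>y\<in>Y - X. insert y X \<in> Ind"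
  using matroid unfolding matroid_def by blast

lemma bases_nonempty: "bases Ind \<noteq> {}"
proof -
  have "Ind \<subseteq> Pow E" "finite E" "{} \<in> Ind"
    using indep_subset_ground matroid unfolding matroid_def by blast+
  then have "finite Ind" "Ind \<noteq> {}"
    by (auto intro: finite_subset)
  then show ?thesis
    using finite_has_maximal[of Ind] unfolding bases_def facets_def by blast
qed

lemma card_indep_le_card_basis:
  assumes "X \<in> Ind" "B \<in> bases Ind"
  shows "card X \<le> card B"
proof (rule ccontr)
  assume "\<not> card X \<le> card B"
  then obtain y where "y \<in> X - B" "insert y B \<in> Ind"
    using indep_augment assms bases_subset_indep by (meson not_le subsetD)
  then show False
    using basis_maximal[OF assms(2)] by blast
qed

lemma card_bases_eq: "B \<in> bases Ind \<Longrightarrow> B' \<in> bases Ind \<Longrightarrow> card B = card B'"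
  using card_indep_le_card_basis bases_subset_indep by (meson le_antisym subsetD)

lemma indep_is_basis_if_card_eq:
  assumes "X \<in> Ind" "B \<in> bases Ind" "card X = card B"
  shows "X \<in> bases Ind"
  unfolding bases_def facets_def
proof (intro CollectI conjI ballI impI)
  fix Y assume "Y \<in> Ind" "X \<subseteq> Y"
  moreover have "card Y \<le> card X"
    using card_indep_le_card_basis[OF \<open>Y \<in> Ind\<close> assms(2)] assms(3) by simp
  ultimately show "Y = X"
    using indep_finite card_seteq by blast
qed fact

lemma indep_extends_to_basis_within:
  assumes "B \<in> bases Ind" "B \<subseteq> Z"
  shows "X \<in> Ind \<Longrightarrow> X \<subseteq> Z \<Longrightarrow> \<exists>J\<in>bases Ind. X \<subseteq> J \<and> J \<subseteq> Z"
proof (induction "card B - card X" arbitrary: X rule: less_induct)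
  case less
  show ?case
  proof (cases "card X < card B")
    case True
    then obtain y where y: "y \<in> B - X" "insert y X \<in> Ind"
      using indep_augment less.prems(1) assms(1) bases_subset_indep by blast
    have "card B - card (insert y X) < card B - card X"
      using True y(1) indep_finite[OF less.prems(1)] by simp
    moreover have "insert y X \<subseteq> Z"
      using y(1) assms(2) less.prems(2) by blast
    ultimately show ?thesis
      using less.hyps[OF _ y(2)] by blast
  next
    case False
    then have "X \<in> bases Ind"
      using indep_is_basis_if_card_eq card_indep_le_card_basis less.prems(1) assms(1)
      by (simp add: le_antisym not_less)
    then show ?thesis
      using less.prems(2) by blast
  qed
qed

lemma pure_card_indep:
  assumes "B \<in> bases Ind"
  shows "pure_card Ind (card B)"
  unfolding pure_card_def
proof (intro conjI ballI)
  fix X assume "X \<in> Ind"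
  then obtain J where "J \<in> bases Ind" "X \<subseteq> J"
    using indep_extends_to_basis_within[OF assms, of E] indep_subset_ground assms
      bases_subset_indep by blast
  then show "\<exists>J\<in>Ind. X \<subseteq> J \<and> card J = card B"
    using card_bases_eq[OF _ assms] bases_subset_indep by blast
qed (use card_indep_le_card_basis assms in blast)

lemma basis_exchange_within_insert:
  assumes B: "B \<in> bases Ind" and "a \<notin> B" and I: "I \<in> Ind" "a \<in> I" "I \<subseteq> insert a B"
  shows "\<exists>b\<in>B - I. (B - {b}) \<union> {a} \<in> bases Ind"
proof -
  obtain J where J: "J \<in> bases Ind" "I \<subseteq> J" "J \<subseteq> insert a B"
    using indep_extends_to_basis_within[OF B _ I(1,3)] by blast
  have fin: "finite B" "finite J"
    using B J(1) bases_subset_indep indep_finite by blast+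
  have "card J < card (insert a B)"
    using card_bases_eq[OF J(1) B] fin \<open>a \<notin> B\<close> by simp
  then obtain b where b: "b \<in> insert a B" "b \<notin> J"
    using card_mono[of J "insert a B"] fin(2) by (auto simp: not_le[symmetric])
  then have "b \<in> B - I"
    using J(2) I(2) by auto
  have "card ((B - {b}) \<union> {a}) = Suc (card (B - {b}))"
    using fin(1) \<open>a \<notin> B\<close> by simp
  also have "\<dots> = card J"
    using card.remove[OF fin(1), of b] card_bases_eq[OF J(1) B] \<open>b \<in> B - I\<close> by simp
  finally have "J = (B - {b}) \<union> {a}"
    using J(3) b fin card_seteq[of "(B - {b}) \<union> {a}" J] by auto
  then show ?thesis
    using J(1) \<open>b \<in> B - I\<close> by blast
qed

lemma lighter_basis_exchange:
  assumes A: "A \<in> bases Ind" and B: "B \<in> bases Ind" and lighter: "weight l A < weight l B"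
  shows "\<exists>b\<in>B - A. \<exists>a\<in>A - B. l a < l b \<and> (B - {b}) \<union> {a} \<in> bases Ind"
proof -
  have fin: "finite A" "finite B"
    using A B bases_subset_indep indep_finite by blast+
  have "card (A - B) = card (B - A)"
    using card_bases_eq[OF A B] fin by (simp add: card_Diff_subset_Int Int_commute)
  moreover have "sum l (A - B) < sum l (B - A)"
    using lighter fin sum.Int_Diff[of A l B] sum.Int_Diff[of B l A]
    unfolding weight_def by (simp add: Int_commute)
  ultimately obtain t where t: "card {b\<in>B - A. l b < t} < card {a\<in>A - B. l a < t}"
    using sum_le_sum_if_counts_below_le[of "A - B" "B - A" l] fin by (force simp: not_le[symmetric])
  define X where "X = (A \<inter> B) \<union> {a\<in>A - B. l a < t}"
  define Y where "Y = (A \<inter> B) \<union> {b\<in>B - A. l b < t}"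
  have "X \<subseteq> A" "Y \<subseteq> B"
    unfolding X_def Y_def by auto
  then have "X \<in> Ind" "Y \<in> Ind"
    using A B bases_subset_indep indep_subset by blast+
  moreover have "card Y < card X"
    unfolding X_def Y_def using t fin by (simp add: card_Un_disjoint disjoint_iff)
  ultimately obtain a where a: "a \<in> X - Y" "insert a Y \<in> Ind"
    using indep_augment by blast
  then have "a \<in> A - B" "l a < t"
    unfolding X_def Y_def by auto
  moreover obtain b where "b \<in> B - insert a Y" "(B - {b}) \<union> {a} \<in> bases Ind"
    using basis_exchange_within_insert[OF B, of a "insert a Y"] a(2) \<open>a \<in> A - B\<close>
    unfolding Y_def by blast
  moreover from this have "b \<in> B - A" "t \<le> l b"
    unfolding Y_def by auto
  ultimately show ?thesis
    by fastforce
qed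

context
  fixes l :: "'a \<Rightarrow> real" and Bs :: "'a set list"
  assumes set_Bs: "set Bs = bases Ind"
    and sorted_Bs: "sorted_wrt (\<lambda>B B'. weight l B < weight l B') Bs"
begin

lemma nth_basis: "i < length Bs \<Longrightarrow> Bs ! i \<in> bases Ind"
  using set_Bs nth_mem by blast

lemma index_less_if_weight_less:
  assumes "i < length Bs" "j < length Bs" "weight l (Bs ! i) < weight l (Bs ! j)"
  shows "i < j"
proof (rule ccontr)
  assume "\<not> i < j"
  then have "weight l (Bs ! j) \<le> weight l (Bs ! i)"
    using sorted_wrt_nth_less[OF sorted_Bs, of j i] assms(1) by (cases "i = j") auto
  then show False
    using assms(3) by simp
qed

lemma internally_passive_earlier_basis:
  assumes j: "j < length Bs" and b: "b \<in> internally_passive E Ind l (Bs ! j)"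
  shows "\<exists>i<j. Bs ! j - {b} \<subseteq> Bs ! i"
proof -
  obtain b' where b': "b \<in> Bs ! j" "b' \<in> E - Bs ! j" "l b' < l b"
      "(Bs ! j - {b}) \<union> {b'} \<in> bases Ind"
    using b unfolding internally_passive_def by blast
  then have "(Bs ! j - {b}) \<union> {b'} \<in> set Bs"
    using set_Bs by blast
  then obtain i where i: "i < length Bs" "Bs ! i = (Bs ! j - {b}) \<union> {b'}"
    unfolding in_set_conv_nth by blast
  have "finite (Bs ! j)"
    using nth_basis[OF j] bases_subset_indep indep_finite by blast
  then have "weight l (Bs ! i) = weight l (Bs ! j) - l b + l b'"
    using weight_exchange[of "Bs ! j" b b' l] b'(1,2) i(2) by simp
  then have "weight l (Bs ! i) < weight l (Bs ! j)"
    using b'(3) by simp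
  then show ?thesis
    using index_less_if_weight_less[OF i(1) j] i(2) by blast
qed

lemma earlier_basis_misses_internally_passive:
  assumes "i < j" "j < length Bs"
  shows "\<exists>b\<in>internally_passive E Ind l (Bs ! j). b \<notin> Bs ! i"
proof -
  have i: "Bs ! i \<in> bases Ind" and j: "Bs ! j \<in> bases Ind"
    using assms nth_basis by simp_all
  obtain b a where "b \<in> Bs ! j - Bs ! i" "a \<in> Bs ! i - Bs ! j" "l a < l b"
      "(Bs ! j - {b}) \<union> {a} \<in> bases Ind"
    using lighter_basis_exchange[OF i j] sorted_wrt_nth_less[OF sorted_Bs assms]
    by blast
  moreover have "a \<in> E"
    using \<open>a \<in> Bs ! i - Bs ! j\<close> i bases_subset_indep indep_subset_ground by blast
  ultimately show ?thesis
    unfolding internally_passive_def by blast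
qed

lemma contained_in_earlier_basis_iff:
  assumes j: "j < length Bs" and S: "S \<subseteq> Bs ! j"
  shows "(\<exists>i<j. S \<subseteq> Bs ! i) \<longleftrightarrow> \<not> internally_passive E Ind l (Bs ! j) \<subseteq> S"
proof
  assume "\<exists>i<j. S \<subseteq> Bs ! i"
  then show "\<not> internally_passive E Ind l (Bs ! j) \<subseteq> S"
    using earlier_basis_misses_internally_passive[OF _ j] by blast
next
  assume "\<not> internally_passive E Ind l (Bs ! j) \<subseteq> S"
  then obtain b where "b \<in> internally_passive E Ind l (Bs ! j)" "S \<subseteq> Bs ! j - {b}"
    using S by blast
  then show "\<exists>i<j. S \<subseteq> Bs ! i"
    using internally_passive_earlier_basis[OF j] by blast
qed

lemma earlier_faces_of_nth:
  assumes "j < length Bs"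
  shows "gen (take j Bs) \<inter> Pow (Bs ! j) =
    {S. S \<subseteq> Bs ! j \<and> \<not> internally_passive E Ind l (Bs ! j) \<subseteq> S}"
  using gen_take_iff[of j Bs] contained_in_earlier_basis_iff[OF assms] assms by auto

lemma shelling_order_by_weight:
  assumes "distinct Bs"
  shows "shelling_order Ind Bs"
proof -
  obtain B where B: "B \<in> bases Ind"
    using bases_nonempty by blast
  have "pure_card (gen (take j Bs) \<inter> gen [Bs ! j]) (card B - 1)" if j: "j < length Bs" for j
  proof -
    have fin: "finite (Bs ! j)" and card: "card (Bs ! j) = card B"
      using nth_basis[OF j] B bases_subset_indep indep_finite card_bases_eq by blast+
    show ?thesis
      using pure_card_subsets_not_containing[OF fin internally_passive_subset]
      unfolding gen_singleton earlier_faces_of_nth[OF j] card .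
  qed
  then show ?thesis
    unfolding shelling_order_def
    using assms set_Bs pure_card_indep[OF B] by (auto simp: bases_def)
qed

lemma restriction_set_by_weight:
  assumes "j < length Bs"
  shows "restriction_set Bs j = internally_passive E Ind l (Bs ! j)"
proof (rule restriction_set_eqI[OF internally_passive_subset])
  have "gen (take (Suc j) Bs) - gen (take j Bs) = Pow (Bs ! j) - gen (take j Bs) \<inter> Pow (Bs ! j)"
    using gen_take_Suc[OF assms] by blast
  then show "gen (take (Suc j) Bs) - gen (take j Bs) =
      {S. internally_passive E Ind l (Bs ! j) \<subseteq> S \<and> S \<subseteq> Bs ! j}"
    using earlier_faces_of_nth[OF assms] by auto
qed

end

end

theorem theorem1p2:
  fixes E :: "'a set" and Ind :: "'a set set" and l :: "'a \<Rightarrow> real"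
    and Bs :: "'a set list"
  assumes "matroid E Ind"
    and "generic E Ind l"
    and "set Bs = bases Ind" and "distinct Bs"
    and "sorted_wrt (\<lambda>B B'. weight l B < weight l B') Bs"
  shows "shelling_order Ind Bs \<and>
         (\<forall>j < length Bs. restriction_set Bs j = internally_passive E Ind l (Bs ! j))"
  using shelling_order_by_weight[OF assms(1,3,5,4)] restriction_set_by_weight[OF assms(1,3,5)]
  by blast

end
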